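(* Let $N\ge3$. For every $\gamma\in(\mathbb{Z}/N\mathbb{Z})^\times$, $\tilde\delta_\gamma(\mathfrak{dmr}_0^{[N]})\subset\mathfrak{dmr}_0^{[N]}$ and $\delta_\gamma(\mathfrak{dmr}_0^{\mu_N})\subset\mathfrak{dmr}_0^{\mu_N}$.
   Context: $\mu_N$ the complex $N$-th roots of unity, $\iota:\{1,\dots,N\}\to\mathbb{Z}/N\mathbb{Z}$ the residue-class bijection. $\mathbb{Q}\langle\langle\mathcal L\rangle\rangle$: noncommutative formal power series over $\mathcal L$; $(\psi\mid w)$ the coefficient of the word $w$. Alphabets $X=\{x_0\}\cup\{x_\zeta:\zeta\in\mu_N\}$, $Y=\{y_{k,\zeta}:k\ge1,\zeta\in\mu_N\}$, $\widetilde X=\{\tilde x\}\cup\{\tilde x_\alpha:\alpha\in\mathbb{Z}/N\mathbb{Z}\}$, $\widetilde Y=\{\tilde y_{k,\alpha}:k\ge1,\alpha\in\mathbb{Z}/N\mathbb{Z}\}$, with $y_{k,\zeta}\equiv x_0^{k-1}x_\zeta$, $\tilde y_{k,\alpha}\equiv\tilde x^{k-1}\tilde x_\alpha$; $\pi_Y$ (resp. $\pi_{\widetilde Y}$) is the projection of $\mathbb{Q}\langle\langle X\rangle\rangle=\mathbb{Q}\langle\langle Y\rangle\rangle\oplus\mathbb{Q}\langle\langle X\rangle\rangle x_0$ (resp. $\mathbb{Q}\langle\langle\widetilde X\rangle\rangle=\mathbb{Q}\langle\langle\widetilde Y\rangle\rangle\oplus\mathbb{Q}\langle\langle\widetilde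 X\rangle\rangle\tilde x$) onto the first summand. Coproducts: $\widehat\Delta_{sh}$, $\widehat\Delta_{\tilde{sh}}$ make all letters of $X$, $\widetilde X$ primitive; $\widehat\Delta_*(y_{k,\zeta})=y_{k,\zeta}\otimes1+1\otimes y_{k,\zeta}+\sum_{k_1+k_2=k,\,k_i\ge1,\,\zeta_1\zeta_2=\zeta}y_{k_1,\zeta_1}\otimes y_{k_2,\zeta_2}$; $\widehat\Delta_{\tilde*}(\tilde y_{k,\alpha})=\tilde y_{k,\alpha}\otimes1+1\otimes\tilde y_{k,\alpha}+\sum_{k_1+k_2=k,\,k_i\ge1}\tilde y_{k_1,\alpha}\otimes\tilde y_{k_2,\alpha}$. Linear maps: $\mathbf p(x_0^{k_1-1}x_{\zeta_1}\cdots x_0^{k_r-1}x_{\zeta_r}x_0^{k_{r+1}-1})=x_0^{k_1-1}x_{\zeta_1}x_0^{k_2-1}x_{\zeta_1\zeta_2}\cdots x_0^{k_r-1}x_{\zeta_1\cdots\zeta_r}x_0^{k_{r+1}-1}$; $\widetilde{\mathbf q}(\tilde x^{k_1-1}\tilde x_{\alpha_1}\cdots\tilde x^{k_r-1}\tilde x_{\alpha_r}\tilde x^{k_{r+1}-1})=\tilde x^{k_1-1}\tilde x_{\alpha_1-\alpha_2}\cdots\tilde x^{k_{r-1}-1}\tilde x_{\alpha_{r-1}-\alpha_r}\tilde x^{k_r-1}\tilde x_{\alpha_r}\tilde x^{k_{r+1}-1}$. $\mathfrak{dmr}_0^{\mu_N}$: the $\psi\in\mathbb{Q}\langle\langle X\rangle\rangle$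 with (i) $(\psi\mid x_0)=(\psi\mid x_1)=0$; (ii) $\psi$ primitive for $\widehat\Delta_{sh}$; (iii) $(\psi\mid x_\zeta-x_{\zeta^{-1}})=0$ for all $\zeta\in\mu_N$; (iv) $\psi_*:=\pi_Y\mathbf p^{-1}(\psi)+\sum_{n\ge2}\frac{(-1)^{n-1}}{n}(\psi\mid x_0^{n-1}x_1)y_{1,1}^n$ primitive for $\widehat\Delta_*$. $\mathfrak{dmr}_0^{[N]}$: the $\widetilde\psi\in\mathbb{Q}\langle\langle\widetilde X\rangle\rangle$ with (i) $(\widetilde\psi\mid\tilde x)=\sum_\alpha(\widetilde\psi\mid\tilde x_\alpha)=0$; (ii) $\widetilde\psi$ primitive for $\widehat\Delta_{\tilde{sh}}$; (iii) $(\widetilde\psi\mid\tilde x_\alpha-\tilde x_{-\alpha})=0$ for all $\alpha$; (iv) $\widetilde\psi_{\tilde*}:=\pi_{\widetilde Y}\widetilde{\mathbf q}^{-1}(\widetilde\psi)+\sum_{n\ge2}\sum_{a,b_1,\dots,b_n=1}^N\frac{(-1)^{n-1}}{nN^{n+1}}(\widetilde\psi\mid\tilde x^{n-1}\tilde x_{\iota(a)})\tilde y_{1,\iota(b_1)}\cdots\tilde y_{1,\iota(b_n)}$ primitive for $\widehat\Delta_{\tilde*}$. For $\gamma\in(\mathbb{Z}/N\mathbb{Z})^\times$: $\delta_\gamma$ is the algebra automorphism of $\mathbb{Q}\langle\langle X\rangle\rangle$ with $x_0\mapsto x_0$, $x_\zeta\mapsto x_{\zeta^{\iota^{-1}(\gamma)}}$;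 $\tilde\delta_\gamma$ is the algebra automorphism of $\mathbb{Q}\langle\langle\widetilde X\rangle\rangle$ with $\tilde x\mapsto\tilde x$, $\tilde x_\alpha\mapsto\tilde x_{\gamma\alpha}$. *)

theory Defs
  imports Complex_Main "HOL-Computational_Algebra.Primes"
begin

(* Letters of the alphabets X = {x_0} \<union> {x_zeta : zeta \<in> mu_N} and
   X~ = {x~} \<union> {x~_alpha : alpha \<in> Z/NZ}.  Roots of unity are complex numbers
   (validity zeta^N = 1 is imposed by a support condition); residues alpha are
   represented by their canonical representative in {0..<N}. *)
datatype xlet = X0 | XZ complex
datatype tlet = TX | TXA int

type_synonym 'a series = "'a list \<Rightarrow> rat"

definition valid_X :: "nat \<Rightarrow> xlet list \<Rightarrow> bool" where
  "valid_X N w = (\<forall>l\<in>set w. case l of X0 \<Rightarrow> True | XZ z \<Rightarrow> z ^ N = 1)"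

definition valid_T :: "nat \<Rightarrow> tlet list \<Rightarrow> bool" where
  "valid_T N w = (\<forall>l\<in>set w. case l of TX \<Rightarrow> True | TXA a \<Rightarrow> 0 \<le> a \<and> a < int N)"

(* Y-letters y_{k,zeta} = (k, zeta), Y~-letters y~_{k,alpha} = (k, alpha) *)
definition valid_Y :: "nat \<Rightarrow> (nat \<times> complex) list \<Rightarrow> bool" where
  "valid_Y N v = (\<forall>(k,z)\<in>set v. 1 \<le> k \<and> z ^ N = 1)"

definition valid_TY :: "nat \<Rightarrow> (nat \<times> int) list \<Rightarrow> bool" where
  "valid_TY N v = (\<forall>(k,a)\<in>set v. 1 \<le> k \<and> 0 \<le> a \<and> a < int N)"

definition ser_X :: "nat \<Rightarrow> xlet series \<Rightarrow> bool" where
  "ser_X N \<psi> = (\<forall>w. \<psi> w \<noteq> 0 \<longrightarrow> valid_X N w)"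

definition ser_T :: "nat \<Rightarrow> tlet series \<Rightarrow> bool" where
  "ser_T N \<psi> = (\<forall>w. \<psi> w \<noteq> 0 \<longrightarrow> valid_T N w)"

definition yX :: "(nat \<times> complex) list \<Rightarrow> xlet list" where
  "yX v = concat (map (\<lambda>(k,z). replicate (k - 1) X0 @ [XZ z]) v)"

definition tyX :: "(nat \<times> int) list \<Rightarrow> tlet list" where
  "tyX v = concat (map (\<lambda>(k,a). replicate (k - 1) TX @ [TXA a]) v)"

(* A coproduct is an algebra morphism given on letters:
   D a u v = coefficient of u \<otimes> v in Delta(a).
   dw D w u v = coefficient of u \<otimes> v in Delta(w) = Delta(a_1)...Delta(a_n). *)
fun dw :: "('a \<Rightarrow> 'a list \<Rightarrow> 'a list \<Rightarrow> rat) \<Rightarrow> 'a list \<Rightarrow> 'a list \<Rightarrow> 'a list \<Rightarrow> rat" where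
  "dw D [] u v = (if u = [] \<and> v = [] then 1 else 0)"
| "dw D (a # w) u v =
     (\<Sum>i\<le>length u. \<Sum>j\<le>length v. D a (take i u) (take j v) * dw D w (drop i u) (drop j v))"

definition coprod :: "('a \<Rightarrow> 'a list \<Rightarrow> 'a list \<Rightarrow> rat) \<Rightarrow> 'a series \<Rightarrow> 'a list \<Rightarrow> 'a list \<Rightarrow> rat" where
  "coprod D \<psi> u v = (\<Sum>w\<in>{w. dw D w u v \<noteq> 0}. \<psi> w * dw D w u v)"

definition primitive :: "('a \<Rightarrow> 'a list \<Rightarrow> 'a list \<Rightarrow> rat) \<Rightarrow> 'a series \<Rightarrow> bool" where
  "primitive D \<psi> = (\<forall>u v. coprod D \<psi> u v =
      (if v = [] then \<psi> u else 0) + (if u = [] then \<psi> v else 0))"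

definition sh_D :: "'a \<Rightarrow> 'a list \<Rightarrow> 'a list \<Rightarrow> rat" where
  "sh_D a u v = (if u = [a] \<and> v = [] then 1 else 0) + (if u = [] \<and> v = [a] then 1 else 0)"

definition st_D :: "nat \<Rightarrow> nat \<times> complex \<Rightarrow> (nat \<times> complex) list \<Rightarrow> (nat \<times> complex) list \<Rightarrow> rat" where
  "st_D N y u v = sh_D y u v +
     (if (\<exists>k1 z1 k2 z2. u = [(k1,z1)] \<and> v = [(k2,z2)] \<and> 1 \<le> k1 \<and> 1 \<le> k2 \<and>
          k1 + k2 = fst y \<and> z1 ^ N = 1 \<and> z2 ^ N = 1 \<and> z1 * z2 = snd y) then 1 else 0)"

definition stt_D :: "nat \<times> int \<Rightarrow> (nat \<times> int) list \<Rightarrow> (nat \<times> int) list \<Rightarrow> rat" where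
  "stt_D y u v = sh_D y u v +
     (if (\<exists>k1 k2. u = [(k1, snd y)] \<and> v = [(k2, snd y)] \<and> 1 \<le> k1 \<and> 1 \<le> k2 \<and>
          k1 + k2 = fst y) then 1 else 0)"

fun pX :: "complex \<Rightarrow> xlet list \<Rightarrow> xlet list" where
  "pX c [] = []"
| "pX c (X0 # w) = X0 # pX c w"
| "pX c (XZ z # w) = XZ (c * z) # pX (c * z) w"

fun nextA :: "tlet list \<Rightarrow> int option" where
  "nextA [] = None"
| "nextA (TX # w) = nextA w"
| "nextA (TXA a # w) = Some a"

fun qT :: "nat \<Rightarrow> tlet list \<Rightarrow> tlet list" where
  "qT N [] = []"
| "qT N (TX # w) = TX # qT N w"
| "qT N (TXA a # w) =
     TXA (case nextA w of None \<Rightarrow> a | Some b \<Rightarrow> (a - b) mod int N) # qT N w"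

definition iota :: "nat \<Rightarrow> nat \<Rightarrow> int" where
  "iota N a = int a mod int N"

definition iota_inv :: "nat \<Rightarrow> int \<Rightarrow> nat" where
  "iota_inv N g = (if g mod int N = 0 then N else nat (g mod int N))"

(* psi_* ; note p^{-1}(psi) = psi o p on words since p permutes words *)
definition psi_star :: "nat \<Rightarrow> xlet series \<Rightarrow> (nat \<times> complex) series" where
  "psi_star N \<psi> v = (if valid_Y N v then
      \<psi> (pX 1 (yX v)) +
      (if 2 \<le> length v \<and> v = replicate (length v) (1, 1)
       then (-1) ^ (length v - 1) / of_nat (length v) * \<psi> (replicate (length v - 1) X0 @ [XZ 1])
       else 0)
    else 0)"

definition psi_star_t :: "nat \<Rightarrow> tlet series \<Rightarrow> (nat \<times> int) series" where
  "psi_star_t N \<psi> v = (if valid_TY N v then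
      \<psi> (qT N (tyX v)) +
      (if 2 \<le> length v then
         (let n = length v in
           (\<Sum>a=1..N. (-1) ^ (n - 1) / (of_nat n * of_nat N ^ (n + 1)) *
               \<psi> (replicate (n - 1) TX @ [TXA (iota N a)])) *
           of_nat (card {bs. length bs = n \<and> set bs \<subseteq> {1..N} \<and>
                             map (\<lambda>b. (1, iota N b)) bs = v}))
       else 0)
    else 0)"

definition dmr0_mu :: "nat \<Rightarrow> xlet series \<Rightarrow> bool" where
  "dmr0_mu N \<psi> = (ser_X N \<psi> \<and>
     \<psi> [X0] = 0 \<and> \<psi> [XZ 1] = 0 \<and>
     primitive sh_D \<psi> \<and>
     (\<forall>z. z ^ N = 1 \<longrightarrow> \<psi> [XZ z] - \<psi> [XZ (inverse z)] = 0) \<and>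
     primitive (st_D N) (psi_star N \<psi>))"

definition dmr0_N :: "nat \<Rightarrow> tlet series \<Rightarrow> bool" where
  "dmr0_N N \<psi> = (ser_T N \<psi> \<and>
     \<psi> [TX] = 0 \<and> (\<Sum>a\<in>{0..<int N}. \<psi> [TXA a]) = 0 \<and>
     primitive sh_D \<psi> \<and>
     (\<forall>a\<in>{0..<int N}. \<psi> [TXA a] - \<psi> [TXA ((- a) mod int N)] = 0) \<and>
     primitive stt_D (psi_star_t N \<psi>))"

definition push :: "('a list \<Rightarrow> bool) \<Rightarrow> ('a \<Rightarrow> 'a) \<Rightarrow> 'a series \<Rightarrow> 'a series" where
  "push valid f \<psi> w' = (\<Sum>w\<in>{w. valid w \<and> map f w = w'}. \<psi> w)"

fun delta :: "nat \<Rightarrow> int \<Rightarrow> xlet \<Rightarrow> xlet" where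
  "delta N g X0 = X0"
| "delta N g (XZ z) = XZ (z ^ iota_inv N g)"

fun tdelta :: "nat \<Rightarrow> int \<Rightarrow> tlet \<Rightarrow> tlet" where
  "tdelta N g TX = TX"
| "tdelta N g (TXA a) = TXA ((g * a) mod int N)"

end

(* For a unit gamma mod N, delta_gamma and delta~_gamma permute the letters through a group
   automorphism sigma of mu_N (z \<mapsto> z^gamma), resp. of Z/NZ (alpha \<mapsto> gamma alpha), and pushing a
   series forward along a letter permutation tau merely relabels its coefficients:
   phi (tau w) = psi w.  Every defining condition of dmr_0 is invariant under such a relabelling.
   The coproducts are compatible with sigma since Delta_* only uses the group law of mu_N and
   Delta_~* only repeats a residue; p and q~ commute with sigma since they are built from
   partial products of roots, resp. differences of residues; and the correction terms of psi_*
   involve only the letter x_1, resp. a sum over all residues, which sigma fixes, resp. permutes. *)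

theory Submission
  imports Defs "HOL-Number_Theory.Cong"
begin

section \<open>Transport along a permutation of letters\<close>

lemma surj_map: "surj f \<Longrightarrow> surj (map f)"
  by (metis lists_UNIV lists_image)

lemma bij_apsnd:
  assumes "bij f"
  shows "bij (apsnd f)"
proof (rule bijI)
  show "inj (apsnd f)"
    using assms by (simp add: bij_is_inj)
  have "apsnd f (apsnd (inv f) y) = y" for y
    using assms by (cases y) (simp add: bij_is_surj surj_f_inv_f)
  then show "surj (apsnd f)"
    by (rule surjI)
qed

lemma bij_extend_by_id:
  assumes "bij_betw f S S"
  shows "bij (\<lambda>x. if x \<in> S then f x else x)"
proof (rule bijI)
  have "f x \<in> S" "f x = f y \<longleftrightarrow> x = y" if "x \<in> S" "y \<in> S" for x y
    using assms that by (auto simp: bij_betw_def inj_on_eq_iff)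
  then show "inj (\<lambda>x. if x \<in> S then f x else x)"
    by (auto intro!: injI split: if_splits)
  have "y \<in> f ` S" if "y \<in> S" for y
    using assms that by (simp add: bij_betw_def)
  then show "surj (\<lambda>x. if x \<in> S then f x else x)"
    by (auto simp: surj_def)
qed

lemma dw_map:
  assumes "\<And>a u v. D (\<tau> a) (map \<tau> u) (map \<tau> v) = D a u v"
  shows "dw D (map \<tau> w) (map \<tau> u) (map \<tau> v) = dw D w u v"
  by (induction w arbitrary: u v) (simp_all add: take_map drop_map assms)

lemma coprod_map:
  assumes D: "\<And>a u v. D (\<tau> a) (map \<tau> u) (map \<tau> v) = D a u v"
    and "bij \<tau>" and \<phi>: "\<And>w. \<phi> (map \<tau> w) = \<psi> w"
  shows "coprod D \<phi> (map \<tau> u) (map \<tau> v) = coprod D \<psi> u v"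
proof -
  have dw: "dw D (map \<tau> w) (map \<tau> u) (map \<tau> v) = dw D w u v" for w
    by (rule dw_map[of D \<tau>, OF D])
  have "surj (map \<tau>)"
    using \<open>bij \<tau>\<close> by (simp add: bij_is_surj surj_map)
  then have "{w'. dw D w' (map \<tau> u) (map \<tau> v) \<noteq> 0} = map \<tau> ` {w. dw D w u v \<noteq> 0}"
    (is "?L = ?R")
  proof (intro equalityI subsetI)
    fix w' assume "w' \<in> ?L"
    moreover obtain w where "w' = map \<tau> w"
      using \<open>surj (map \<tau>)\<close> by (metis surjD)
    ultimately show "w' \<in> ?R"
      by (simp add: dw)
  qed (auto simp: dw)
  moreover have "inj (map \<tau>)"
    using \<open>bij \<tau>\<close> by (simp add: bij_is_inj inj_mapI)
  ultimately show ?thesis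
    unfolding coprod_def by (simp add: sum.reindex[OF inj_on_subset[OF _ subset_UNIV]] \<phi> dw)
qed

lemma primitive_map:
  assumes D: "\<And>a u v. D (\<tau> a) (map \<tau> u) (map \<tau> v) = D a u v"
    and "bij \<tau>" and \<phi>: "\<And>w. \<phi> (map \<tau> w) = \<psi> w"
    and "primitive D \<psi>"
  shows "primitive D \<phi>"
  unfolding primitive_def
proof (intro allI)
  fix u' v'
  have "surj (map \<tau>)"
    using \<open>bij \<tau>\<close> by (simp add: bij_is_surj surj_map)
  then obtain u v where "u' = map \<tau> u" "v' = map \<tau> v"
    by (metis surjD)
  then show "coprod D \<phi> u' v' = (if v' = [] then \<phi> u' else 0) + (if u' = [] then \<phi> v' else 0)"
    using coprod_map[of D \<tau> \<phi> \<psi>, OF D \<open>bij \<tau>\<close> \<phi>] \<open>primitive D \<psi>\<close> by (simp add: primitive_def \<phi>)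
qed

lemma sh_D_map: "inj \<tau> \<Longrightarrow> sh_D (\<tau> a) (map \<tau> u) (map \<tau> v) = sh_D a u v"
  unfolding sh_D_def by (auto simp: inj_eq)

lemma support_map:
  assumes "surj \<tau>" and valid: "\<And>w. valid (map \<tau> w) \<longleftrightarrow> valid w"
    and \<phi>: "\<And>w. \<phi> (map \<tau> w) = \<psi> w" and \<psi>: "\<forall>w. \<psi> w \<noteq> 0 \<longrightarrow> valid w"
  shows "\<forall>w. \<phi> w \<noteq> 0 \<longrightarrow> valid w"
proof (intro allI impI)
  fix w assume "\<phi> w \<noteq> 0"
  obtain w0 where "w = map \<tau> w0"
    using surj_map[OF \<open>surj \<tau>\<close>] by (metis surjD)
  then show "valid w"
    using \<open>\<phi> w \<noteq> 0\<close> \<psi> by (simp add: \<phi> valid)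
qed

lemma push_map:
  assumes "inj \<tau>" and f: "\<And>w. valid w \<Longrightarrow> map f w = map \<tau> w"
    and \<psi>: "\<And>w. \<not> valid w \<Longrightarrow> \<psi> w = 0"
  shows "push valid f \<psi> (map \<tau> w) = \<psi> w"
proof -
  have "{w'. valid w' \<and> map f w' = map \<tau> w} = (if valid w then {w} else {})"
  proof -
    have "w' = w" if "valid w'" "map f w' = map \<tau> w" for w'
      using that f[of w'] inj_map_eq_map[OF \<open>inj \<tau>\<close>] by metis
    then show ?thesis
      using f[of w] by auto
  qed
  then show ?thesis
    unfolding push_def using \<psi> by auto
qed

section \<open>Automorphisms of \<mu>_N\<close>

fun xlet_map :: "(complex \<Rightarrow> complex) \<Rightarrow> xlet \<Rightarrow> xlet" where
  "xlet_map \<sigma> X0 = X0"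
| "xlet_map \<sigma> (XZ z) = XZ (\<sigma> z)"

lemma bij_xlet_map:
  assumes "bij \<sigma>"
  shows "bij (xlet_map \<sigma>)"
proof (rule bijI)
  show "inj (xlet_map \<sigma>)"
  proof (rule injI)
    fix a b show "xlet_map \<sigma> a = xlet_map \<sigma> b \<Longrightarrow> a = b"
      using bij_is_inj[OF assms] by (cases a; cases b) (auto simp: inj_eq)
  qed
  have "xlet_map \<sigma> (xlet_map (inv \<sigma>) l) = l" for l
    using assms by (cases l) (simp_all add: bij_is_surj surj_f_inv_f)
  then show "surj (xlet_map \<sigma>)"
    by (rule surjI)
qed

lemma yX_map: "map (xlet_map \<sigma>) (yX v) = yX (map (apsnd \<sigma>) v)"
  unfolding yX_def by (induction v) auto

lemma set_yX: "set (yX v) \<subseteq> insert X0 (XZ ` snd ` set v)"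
  unfolding yX_def by (force simp: image_iff)

lemma valid_yX: "valid_Y N v \<Longrightarrow> valid_X N (yX v)"
  using set_yX[of v] unfolding valid_X_def valid_Y_def by fastforce

text \<open>An automorphism of \<mu>_N, extended to a permutation of the whole complex plane so that
  it induces a permutation of the letter type.\<close>

locale root_automorphism =
  fixes N :: nat and \<sigma> :: "complex \<Rightarrow> complex"
  assumes pos: "0 < N" and bij: "bij \<sigma>"
    and root_iff: "\<sigma> z ^ N = 1 \<longleftrightarrow> z ^ N = 1"
    and mult: "z ^ N = 1 \<Longrightarrow> w ^ N = 1 \<Longrightarrow> \<sigma> (z * w) = \<sigma> z * \<sigma> w"
begin

lemma inj: "inj \<sigma>"
  using bij by (rule bij_is_inj)

lemma one: "\<sigma> 1 = 1"
proof -
  have "\<sigma> 1 ^ N = 1"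
    by (simp add: root_iff)
  then have "\<sigma> 1 \<noteq> 0"
    using pos by (metis power_0_left zero_neq_one gr_implies_not0)
  moreover have "\<sigma> 1 = \<sigma> 1 * \<sigma> 1"
    using mult[of 1 1] by simp
  ultimately show ?thesis
    by simp
qed

lemma inverse:
  assumes "z ^ N = 1"
  shows "\<sigma> (inverse z) = inverse (\<sigma> z)"
proof -
  have "z \<noteq> 0"
    using assms pos by (metis power_0_left zero_neq_one gr_implies_not0)
  then have "\<sigma> z * \<sigma> (inverse z) = 1"
    using assms mult[of z "inverse z"] by (simp add: power_inverse one)
  then show ?thesis
    by (simp add: inverse_unique)
qed

lemma valid_X_map: "valid_X N (map (xlet_map \<sigma>) w) \<longleftrightarrow> valid_X N w"
proof -
  have "(case xlet_map \<sigma> l of X0 \<Rightarrow> True | XZ z \<Rightarrow> z ^ N = 1) \<longleftrightarrow> (case l of X0 \<Rightarrow> True | XZ z \<Rightarrow> z ^ N = 1)" for l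
    by (cases l) (simp_all add: root_iff)
  then show ?thesis
    unfolding valid_X_def by simp
qed

lemma valid_Y_map: "valid_Y N (map (apsnd \<sigma>) v) \<longleftrightarrow> valid_Y N v"
  unfolding valid_Y_def by (auto simp: root_iff)

lemma pX_map:
  "c ^ N = 1 \<Longrightarrow> valid_X N w \<Longrightarrow> map (xlet_map \<sigma>) (pX c w) = pX (\<sigma> c) (map (xlet_map \<sigma>) w)"
proof (induction c w rule: pX.induct)
  case (3 c z w)
  then have "z ^ N = 1" "(c * z) ^ N = 1" "valid_X N w"
    by (simp_all add: valid_X_def power_mult_distrib)
  then show ?case
    using 3 by (simp add: mult)
qed (simp_all add: valid_X_def)

lemma st_D_map: "st_D N (apsnd \<sigma> y) (map (apsnd \<sigma>) u) (map (apsnd \<sigma>) v) = st_D N y u v"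
proof -
  have ex: "(\<exists>k1 z1 k2 z2. P k1 z1 k2 z2) \<longleftrightarrow> (\<exists>k1 z1 k2 z2. P k1 (\<sigma> z1) k2 (\<sigma> z2))" for P
    using surjD[OF bij_is_surj[OF bij]] by metis
  have single: "map (apsnd \<sigma>) u = [(k, \<sigma> z)] \<longleftrightarrow> u = [(k, z)]" for u k z
    using inj_map_eq_map[of "apsnd \<sigma>" u "[(k, z)]"] inj by simp
  have prod: "\<sigma> z * \<sigma> w = \<sigma> x \<longleftrightarrow> z * w = x" if "z ^ N = 1" "w ^ N = 1" for z w x
    using that by (simp add: mult[symmetric] inj_eq[OF inj])
  show ?thesis
    unfolding st_D_def sh_D_map[OF inj_apsnd[THEN iffD2, OF inj]]
    by (subst ex) (simp add: single root_iff prod cong: conj_cong)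
qed

lemma psi_star_map:
  assumes \<phi>: "\<And>w. \<phi> (map (xlet_map \<sigma>) w) = \<psi> w"
  shows "psi_star N \<phi> (map (apsnd \<sigma>) v) = psi_star N \<psi> v"
proof (cases "valid_Y N v")
  case True
  have ones: "map (apsnd \<sigma>) v = replicate (length v) (1, 1) \<longleftrightarrow> v = replicate (length v) (1, 1)"
    using inj_map_eq_map[of "apsnd \<sigma>" v "replicate (length v) (1, 1)"] inj by (simp add: one)
  have "pX 1 (yX (map (apsnd \<sigma>) v)) = map (xlet_map \<sigma>) (pX 1 (yX v))"
    using pX_map[of 1 "yX v"] valid_yX[OF True] by (simp add: yX_map one)
  moreover have "\<phi> (replicate m X0 @ [XZ 1]) = \<psi> (replicate m X0 @ [XZ 1])" for m
    using \<phi>[of "replicate m X0 @ [XZ 1]"] by (simp add: one)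
  ultimately show ?thesis
    unfolding psi_star_def valid_Y_map length_map ones by (simp add: \<phi>)
qed (simp add: psi_star_def valid_Y_map)

lemma dmr0_mu_map:
  assumes "dmr0_mu N \<psi>" and \<phi>: "\<And>w. \<phi> (map (xlet_map \<sigma>) w) = \<psi> w"
  shows "dmr0_mu N \<phi>"
proof -
  have ser: "ser_X N \<psi>" and X0: "\<psi> [X0] = 0" and X1: "\<psi> [XZ 1] = 0"
    and sh: "primitive sh_D \<psi>"
    and sym: "\<forall>z. z ^ N = 1 \<longrightarrow> \<psi> [XZ z] - \<psi> [XZ (inverse z)] = 0"
    and st: "primitive (st_D N) (psi_star N \<psi>)"
    using assms(1) unfolding dmr0_mu_def by blast+
  have \<tau>: "bij (xlet_map \<sigma>)"
    using bij by (rule bij_xlet_map)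
  have letter: "\<phi> [XZ (\<sigma> z)] = \<psi> [XZ z]" for z
    using \<phi>[of "[XZ z]"] by simp
  have "ser_X N \<phi>"
    using support_map[of "xlet_map \<sigma>" "valid_X N" \<phi> \<psi>] bij_is_surj[OF \<tau>] valid_X_map \<phi> ser
    unfolding ser_X_def by blast
  moreover have "\<phi> [X0] = 0" "\<phi> [XZ 1] = 0"
    using \<phi>[of "[X0]"] letter[of 1] X0 X1 by (simp_all add: one)
  moreover have "primitive sh_D \<phi>"
    using primitive_map[of sh_D "xlet_map \<sigma>" \<phi> \<psi>, OF sh_D_map[OF bij_is_inj[OF \<tau>]] \<tau> \<phi> sh] .
  moreover have "\<phi> [XZ z] - \<phi> [XZ (inverse z)] = 0" if "z ^ N = 1" for z
  proof -
    obtain x where x: "z = \<sigma> x"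
      using bij by (metis bij_is_surj surjD)
    then have "x ^ N = 1"
      using that root_iff by simp
    moreover from this have "\<psi> [XZ x] - \<psi> [XZ (inverse x)] = 0"
      using sym by blast
    ultimately show ?thesis
      using x by (simp add: letter inverse[symmetric])
  qed
  moreover have "primitive (st_D N) (psi_star N \<phi>)"
    using primitive_map[of "st_D N" "apsnd \<sigma>" "psi_star N \<phi>" "psi_star N \<psi>",
        OF st_D_map bij_apsnd[OF bij] psi_star_map[of \<phi> \<psi>, OF \<phi>] st] .
  ultimately show ?thesis
    unfolding dmr0_mu_def by blast
qed

end

definition root_pow :: "nat \<Rightarrow> nat \<Rightarrow> complex \<Rightarrow> complex" where
  "root_pow N k z = (if z ^ N = 1 then z ^ k else z)"

lemma power_mod_of_root:
  fixes z :: "'a::comm_monoid_mult"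
  assumes "z ^ N = 1"
  shows "z ^ m = z ^ (m mod N)"
proof -
  have "z ^ m = z ^ (N * (m div N) + m mod N)"
    by simp
  also have "\<dots> = (z ^ N) ^ (m div N) * z ^ (m mod N)"
    by (simp only: power_add power_mult)
  finally show ?thesis
    using assms by simp
qed

lemma root_automorphism_root_pow:
  assumes "0 < N" and "coprime k N"
  shows "root_automorphism N (root_pow N k)"
proof
  obtain k' where k': "[k * k' = 1] (mod N)"
    using cong_solve_coprime_nat[OF assms(2)] by auto
  have pow_root: "(z ^ m) ^ N = 1" if "z ^ N = 1" for z :: complex and m
    using that by (metis power_mult mult.commute power_one)
  have pow_pow: "(z ^ k) ^ k' = z" "(z ^ k') ^ k = z" if "z ^ N = 1" for z :: complex
  proof -
    have "(z ^ k) ^ k' = z ^ ((k * k') mod N)"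
      using power_mod_of_root[OF that] by (simp add: power_mult)
    also have "\<dots> = z"
      using k' power_mod_of_root[OF that, of 1] by (simp add: cong_def)
    finally show "(z ^ k) ^ k' = z" .
    then show "(z ^ k') ^ k = z"
      by (metis power_mult mult.commute)
  qed
  have "bij_betw (\<lambda>z. z ^ k) {z :: complex. z ^ N = 1} {z. z ^ N = 1}"
    by (rule bij_betw_byWitness[where f'="\<lambda>z. z ^ k'"]) (auto simp: pow_pow pow_root)
  then show "bij (root_pow N k)"
    using bij_extend_by_id unfolding root_pow_def[abs_def] by fastforce
  show "root_pow N k z ^ N = 1 \<longleftrightarrow> z ^ N = 1" for z
    by (simp add: root_pow_def pow_root)
  show "root_pow N k (z * w) = root_pow N k z * root_pow N k w" if "z ^ N = 1" "w ^ N = 1" for z w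
    using that by (simp add: root_pow_def power_mult_distrib)
qed (rule assms(1))

lemma coprime_iota_inv:
  assumes "0 < N" and "coprime \<gamma> (int N)"
  shows "coprime (iota_inv N \<gamma>) N"
proof (cases "\<gamma> mod int N = 0")
  case True
  then have "int N dvd \<gamma>"
    by auto
  then have "N = 1"
    using coprime_common_divisor_int[OF assms(2) _ dvd_refl] by simp
  then show ?thesis
    by simp
next
  case False
  then have "int (iota_inv N \<gamma>) = \<gamma> mod int N"
    using assms(1) by (simp add: iota_inv_def)
  moreover have "coprime (\<gamma> mod int N) (int N)"
    using assms by simp
  ultimately show ?thesis
    by (metis coprime_int_iff)
qed

lemma dmr0_mu_push_delta:
  assumes "0 < N" and "coprime \<gamma> (int N)" and \<psi>: "dmr0_mu N \<psi>"
  shows "dmr0_mu N (push (valid_X N) (delta N \<gamma>) \<psi>)"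
proof -
  let ?\<sigma> = "root_pow N (iota_inv N \<gamma>)"
  interpret root_automorphism N ?\<sigma>
    using root_automorphism_root_pow coprime_iota_inv assms by blast
  have "map (delta N \<gamma>) w = map (xlet_map ?\<sigma>) w" if "valid_X N w" for w
  proof (rule map_cong[OF refl])
    fix l assume "l \<in> set w"
    then have "case l of X0 \<Rightarrow> True | XZ z \<Rightarrow> z ^ N = 1"
      using that unfolding valid_X_def by blast
    then show "delta N \<gamma> l = xlet_map ?\<sigma> l"
      by (cases l) (simp_all add: root_pow_def)
  qed
  moreover have "\<psi> w = 0" if "\<not> valid_X N w" for w
    using \<psi> that unfolding dmr0_mu_def ser_X_def by blast
  ultimately show ?thesis
    using dmr0_mu_map[OF \<psi>] push_map[of "xlet_map ?\<sigma>" "valid_X N" "delta N \<gamma>" \<psi>]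
      bij_xlet_map[OF bij] by (simp add: bij_is_inj)
qed

section \<open>Automorphisms of \<int>/N\<int>\<close>

fun tlet_map :: "(int \<Rightarrow> int) \<Rightarrow> tlet \<Rightarrow> tlet" where
  "tlet_map \<sigma> TX = TX"
| "tlet_map \<sigma> (TXA a) = TXA (\<sigma> a)"

lemma bij_tlet_map:
  assumes "bij \<sigma>"
  shows "bij (tlet_map \<sigma>)"
proof (rule bijI)
  show "inj (tlet_map \<sigma>)"
  proof (rule injI)
    fix a b show "tlet_map \<sigma> a = tlet_map \<sigma> b \<Longrightarrow> a = b"
      using bij_is_inj[OF assms] by (cases a; cases b) (auto simp: inj_eq)
  qed
  have "tlet_map \<sigma> (tlet_map (inv \<sigma>) l) = l" for l
    using assms by (cases l) (simp_all add: bij_is_surj surj_f_inv_f)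
  then show "surj (tlet_map \<sigma>)"
    by (rule surjI)
qed

lemma tyX_map: "map (tlet_map \<sigma>) (tyX v) = tyX (map (apsnd \<sigma>) v)"
  unfolding tyX_def by (induction v) auto

lemma set_tyX: "set (tyX v) \<subseteq> insert TX (TXA ` snd ` set v)"
  unfolding tyX_def by (force simp: image_iff)

lemma valid_tyX: "valid_TY N v \<Longrightarrow> valid_T N (tyX v)"
  using set_tyX[of v] unfolding valid_T_def valid_TY_def by fastforce

lemma nextA_map: "nextA (map (tlet_map \<sigma>) w) = map_option \<sigma> (nextA w)"
  by (induction w rule: nextA.induct) simp_all

lemma nextA_in_set: "nextA w = Some b \<Longrightarrow> TXA b \<in> set w"
  by (induction w rule: nextA.induct) auto

lemma bij_betw_iota:
  assumes "0 < N"
  shows "bij_betw (iota N) {1..N} {0..<int N}"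
proof (rule bij_betw_byWitness[where f'="iota_inv N"])
  have "iota_inv N (iota N a) = a" if "a \<in> {1..N}" for a
    using that by (cases "a = N") (simp_all add: iota_def iota_inv_def)
  then show "\<forall>a \<in> {1..N}. iota_inv N (iota N a) = a"
    by blast
  have "iota N (iota_inv N b) = b" if "b \<in> {0..<int N}" for b
    using that by (cases "b = 0") (simp_all add: iota_def iota_inv_def)
  then show "\<forall>b \<in> {0..<int N}. iota N (iota_inv N b) = b"
    by blast
  show "iota N ` {1..N} \<subseteq> {0..<int N}"
    using assms by (auto simp: iota_def)
  have "iota_inv N b \<in> {1..N}" if "b \<in> {0..<int N}" for b
    using that assms by (cases "b = 0") (auto simp: iota_inv_def)
  then show "iota_inv N ` {0..<int N} \<subseteq> {1..N}"
    by blast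
qed

lemma sum_iota: "0 < N \<Longrightarrow> (\<Sum>a = 1..N. f (iota N a)) = (\<Sum>b \<in> {0..<int N}. f b)"
  using sum.reindex_bij_betw[OF bij_betw_iota] .

lemma card_fiber_inj_on:
  assumes "inj_on f A"
  shows "card {x \<in> A. f x = y} = (if y \<in> f ` A then 1 else 0)"
proof (cases "y \<in> f ` A")
  case True
  then obtain x0 where x0: "x0 \<in> A" "f x0 = y"
    by blast
  have "{x \<in> A. f x = y} = {x0}"
  proof (intro equalityI subsetI)
    fix x assume "x \<in> {x \<in> A. f x = y}"
    then have "x \<in> A" "f x = f x0"
      using x0 by simp_all
    then show "x \<in> {x0}"
      using inj_onD[OF assms _ _ x0(1)] by blast
  qed (use x0 in simp)
  then show ?thesis
    using True by simp
next
  case False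
  then have empty: "{x \<in> A. f x = y} = {}"
    by blast
  show ?thesis
    unfolding empty using False by simp
qed

lemma card_iota_lists:
  fixes v :: "(nat \<times> int) list"
  assumes "0 < N" and "length v = n"
  shows "card {bs. length bs = n \<and> set bs \<subseteq> {1..N} \<and> map (\<lambda>b. (1, iota N b)) bs = v}
    = (if set v \<subseteq> {1} \<times> {0..<int N} then 1 else 0)"
proof -
  define h where "h = (\<lambda>b. (1 :: nat, iota N b))"
  have iota: "inj_on (iota N) {1..N}" "iota N ` {1..N} = {0..<int N}"
    using bij_betw_iota[OF assms(1)] by (simp_all add: bij_betw_def)
  have "inj_on h {1..N}"
    unfolding h_def
  proof (rule inj_onI)
    fix a b assume "a \<in> {1..N}" "b \<in> {1..N}" "(1 :: nat, iota N a) = (1, iota N b)"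
    then show "a = b"
      by (intro inj_onD[OF iota(1)]) simp_all
  qed
  then have inj: "inj_on (map h) (lists {1..N})"
    by (rule inj_on_map_lists)
  have "h ` {1..N} = {1} \<times> iota N ` {1..N}"
    by (auto simp: h_def)
  then have img: "map h ` lists {1..N} = lists ({1} \<times> {0..<int N})"
    by (simp only: lists_image[symmetric] iota(2))
  have fiber: "{bs. length bs = n \<and> set bs \<subseteq> {1..N} \<and> map (\<lambda>b. (1, iota N b)) bs = v}
      = {bs \<in> lists {1..N}. map h bs = v}"
    unfolding h_def lists_eq_set using assms(2) by auto
  show ?thesis
    unfolding fiber card_fiber_inj_on[OF inj] img by (simp add: lists_eq_set)
qed

text \<open>An automorphism of \<int>/N\<int>, with residues represented in {0..<N} and extended to a
  permutation of the integers; additivity is stated for differences, the operation used by q~.\<close>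

locale residue_automorphism =
  fixes N :: nat and \<sigma> :: "int \<Rightarrow> int"
  assumes pos: "0 < N" and bij: "bij \<sigma>"
    and residue_iff: "\<sigma> a \<in> {0..<int N} \<longleftrightarrow> a \<in> {0..<int N}"
    and diff: "a \<in> {0..<int N} \<Longrightarrow> b \<in> {0..<int N} \<Longrightarrow> \<sigma> ((a - b) mod int N) = (\<sigma> a - \<sigma> b) mod int N"
begin

lemma inj: "inj \<sigma>"
  using bij by (rule bij_is_inj)

lemma zero: "\<sigma> 0 = 0"
proof -
  have "(0 :: int) \<in> {0..<int N}"
    using pos by simp
  from diff[OF this this] show ?thesis
    by simp
qed

lemma neg: "a \<in> {0..<int N} \<Longrightarrow> \<sigma> ((- a) mod int N) = (- \<sigma> a) mod int N"
  using diff[of 0 a] pos by (simp add: zero)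

lemma bij_betw_residues: "bij_betw \<sigma> {0..<int N} {0..<int N}"
proof -
  have "\<sigma> ` {0..<int N} = {0..<int N}"
  proof (intro equalityI subsetI)
    fix b assume "b \<in> {0..<int N}"
    moreover obtain a where "b = \<sigma> a"
      using bij by (metis bij_is_surj surjD)
    ultimately show "b \<in> \<sigma> ` {0..<int N}"
      using residue_iff by blast
  qed (use residue_iff in blast)
  then show ?thesis
    using inj_on_subset[OF inj subset_UNIV] by (simp add: bij_betw_def)
qed

lemma sum_residues: "(\<Sum>a \<in> {0..<int N}. f (\<sigma> a)) = (\<Sum>a \<in> {0..<int N}. f a)"
  using sum.reindex_bij_betw[OF bij_betw_residues] .

lemma valid_T_map: "valid_T N (map (tlet_map \<sigma>) w) \<longleftrightarrow> valid_T N w"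
proof -
  have "(case tlet_map \<sigma> l of TX \<Rightarrow> True | TXA a \<Rightarrow> 0 \<le> a \<and> a < int N) \<longleftrightarrow>
      (case l of TX \<Rightarrow> True | TXA a \<Rightarrow> 0 \<le> a \<and> a < int N)" for l
    using residue_iff by (cases l) auto
  then show ?thesis
    unfolding valid_T_def by simp
qed

lemma valid_TY_map: "valid_TY N (map (apsnd \<sigma>) v) \<longleftrightarrow> valid_TY N v"
proof -
  have "(case apsnd \<sigma> y of (k, a) \<Rightarrow> 1 \<le> k \<and> 0 \<le> a \<and> a < int N) \<longleftrightarrow>
      (case y of (k, a) \<Rightarrow> 1 \<le> k \<and> 0 \<le> a \<and> a < int N)" for y :: "nat \<times> int"
    using residue_iff by (cases y) simp
  then show ?thesis
    unfolding valid_TY_def by simp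
qed

lemma qT_map: "valid_T N w \<Longrightarrow> map (tlet_map \<sigma>) (qT N w) = qT N (map (tlet_map \<sigma>) w)"
proof (induction w)
  case (Cons l w)
  then have w: "valid_T N w"
    by (simp add: valid_T_def)
  show ?case
  proof (cases l)
    case TX
    then show ?thesis
      using Cons.IH[OF w] by simp
  next
    case (TXA a)
    then have a: "a \<in> {0..<int N}"
      using Cons.prems by (simp add: valid_T_def)
    have "\<sigma> (case nextA w of None \<Rightarrow> a | Some b \<Rightarrow> (a - b) mod int N) =
        (case nextA (map (tlet_map \<sigma>) w) of None \<Rightarrow> \<sigma> a | Some b \<Rightarrow> (\<sigma> a - b) mod int N)"
    proof (cases "nextA w")
      case (Some b)
      then have "b \<in> {0..<int N}"
        using w nextA_in_set unfolding valid_T_def by fastforce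
      then show ?thesis
        using Some diff[OF a] by (simp add: nextA_map)
    qed (simp add: nextA_map)
    then show ?thesis
      using Cons.IH[OF w] TXA by simp
  qed
qed simp

lemma stt_D_map: "stt_D (apsnd \<sigma> y) (map (apsnd \<sigma>) u) (map (apsnd \<sigma>) v) = stt_D y u v"
proof -
  have single: "map (apsnd \<sigma>) u = [(k, \<sigma> a)] \<longleftrightarrow> u = [(k, a)]" for u k a
    using inj_map_eq_map[of "apsnd \<sigma>" u "[(k, a)]"] inj by simp
  show ?thesis
    unfolding stt_D_def sh_D_map[OF inj_apsnd[THEN iffD2, OF inj]] by (simp add: single)
qed

lemma psi_star_t_map:
  assumes \<phi>: "\<And>w. \<phi> (map (tlet_map \<sigma>) w) = \<psi> w"
  shows "psi_star_t N \<phi> (map (apsnd \<sigma>) v) = psi_star_t N \<psi> v"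
proof (cases "valid_TY N v")
  case True
  have "qT N (tyX (map (apsnd \<sigma>) v)) = map (tlet_map \<sigma>) (qT N (tyX v))"
    using qT_map[OF valid_tyX[OF True]] by (simp add: tyX_map)
  moreover have "(\<Sum>a = 1..N. c * \<phi> (replicate m TX @ [TXA (iota N a)]))
      = (\<Sum>a = 1..N. c * \<psi> (replicate m TX @ [TXA (iota N a)]))" for c m
  proof -
    have "(\<Sum>a = 1..N. c * \<phi> (replicate m TX @ [TXA (iota N a)]))
        = (\<Sum>b \<in> {0..<int N}. c * \<phi> (replicate m TX @ [TXA b]))"
      by (rule sum_iota[OF pos])
    also have "\<dots> = (\<Sum>b \<in> {0..<int N}. c * \<phi> (replicate m TX @ [TXA (\<sigma> b)]))"
      by (rule sum_residues[symmetric])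
    also have "\<dots> = (\<Sum>b \<in> {0..<int N}. c * \<psi> (replicate m TX @ [TXA b]))"
      using \<phi>[of "replicate m TX @ [TXA _]"] by simp
    also have "\<dots> = (\<Sum>a = 1..N. c * \<psi> (replicate m TX @ [TXA (iota N a)]))"
      by (rule sum_iota[OF pos, symmetric])
    finally show ?thesis .
  qed
  moreover have "card {bs. length bs = length v \<and> set bs \<subseteq> {1..N} \<and> map (\<lambda>b. (1, iota N b)) bs = map (apsnd \<sigma>) v}
      = card {bs. length bs = length v \<and> set bs \<subseteq> {1..N} \<and> map (\<lambda>b. (1, iota N b)) bs = v}"
  proof -
    have "set (map (apsnd \<sigma>) v) \<subseteq> {1} \<times> {0..<int N} \<longleftrightarrow> set v \<subseteq> {1} \<times> {0..<int N}"
      using residue_iff by auto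
    then show ?thesis
      unfolding card_iota_lists[OF pos length_map] card_iota_lists[OF pos refl] by simp
  qed
  ultimately show ?thesis
    unfolding psi_star_t_def Let_def valid_TY_map length_map by (simp only: \<phi>)
qed (simp add: psi_star_t_def valid_TY_map)

lemma dmr0_N_map:
  assumes "dmr0_N N \<psi>" and \<phi>: "\<And>w. \<phi> (map (tlet_map \<sigma>) w) = \<psi> w"
  shows "dmr0_N N \<phi>"
proof -
  have ser: "ser_T N \<psi>" and TX: "\<psi> [TX] = 0" and sum: "(\<Sum>a \<in> {0..<int N}. \<psi> [TXA a]) = 0"
    and sh: "primitive sh_D \<psi>"
    and sym: "\<forall>a \<in> {0..<int N}. \<psi> [TXA a] - \<psi> [TXA ((- a) mod int N)] = 0"
    and st: "primitive stt_D (psi_star_t N \<psi>)"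
    using assms(1) unfolding dmr0_N_def by blast+
  have \<tau>: "bij (tlet_map \<sigma>)"
    using bij by (rule bij_tlet_map)
  have letter: "\<phi> [TXA (\<sigma> a)] = \<psi> [TXA a]" for a
    using \<phi>[of "[TXA a]"] by simp
  have "ser_T N \<phi>"
    using support_map[of "tlet_map \<sigma>" "valid_T N" \<phi> \<psi>] bij_is_surj[OF \<tau>] valid_T_map \<phi> ser
    unfolding ser_T_def by blast
  moreover have "\<phi> [TX] = 0"
    using \<phi>[of "[TX]"] TX by simp
  moreover have "(\<Sum>a \<in> {0..<int N}. \<phi> [TXA a]) = 0"
    using sum_residues[of "\<lambda>a. \<phi> [TXA a]"] sum by (simp add: letter)
  moreover have "primitive sh_D \<phi>"
    using primitive_map[of sh_D "tlet_map \<sigma>" \<phi> \<psi>, OF sh_D_map[OF bij_is_inj[OF \<tau>]] \<tau> \<phi> sh] .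
  moreover have "\<phi> [TXA a] - \<phi> [TXA ((- a) mod int N)] = 0" if "a \<in> {0..<int N}" for a
  proof -
    obtain b where b: "a = \<sigma> b"
      using bij by (metis bij_is_surj surjD)
    then have "b \<in> {0..<int N}"
      using that residue_iff by simp
    moreover from this have "\<psi> [TXA b] - \<psi> [TXA ((- b) mod int N)] = 0"
      using sym by blast
    ultimately show ?thesis
      using b by (simp add: letter neg[symmetric])
  qed
  moreover have "primitive stt_D (psi_star_t N \<phi>)"
    using primitive_map[of stt_D "apsnd \<sigma>" "psi_star_t N \<phi>" "psi_star_t N \<psi>",
        OF stt_D_map bij_apsnd[OF bij] psi_star_t_map[of \<phi> \<psi>, OF \<phi>] st] .
  ultimately show ?thesis
    unfolding dmr0_N_def by blast
qed

end

definition residue_scale :: "nat \<Rightarrow> int \<Rightarrow> int \<Rightarrow> int" where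
  "residue_scale N g a = (if a \<in> {0..<int N} then (g * a) mod int N else a)"

lemma residue_automorphism_residue_scale:
  assumes "0 < N" and "coprime g (int N)"
  shows "residue_automorphism N (residue_scale N g)"
proof
  obtain g' where g': "[g' * g = 1] (mod int N)"
    using cong_solve_coprime_int[OF assms(2)] by (auto simp: mult.commute)
  have cancel: "(c * ((d * a) mod int N)) mod int N = a"
    if "[c * d = 1] (mod int N)" and "a \<in> {0..<int N}" for c d a
  proof -
    have "[c * ((d * a) mod int N) = c * d * a] (mod int N)"
      by (simp add: cong_def mod_simps mult.assoc)
    also have "[c * d * a = 1 * a] (mod int N)"
      using that(1) by (rule cong_mult) simp
    finally show ?thesis
      using that(2) by (simp add: cong_def)
  qed
  have "[g * g' = 1] (mod int N)"
    using g' by (simp add: mult.commute)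
  then have "bij_betw (\<lambda>a. (g * a) mod int N) {0..<int N} {0..<int N}"
    using g' assms(1)
    by (intro bij_betw_byWitness[where f'="\<lambda>a. (g' * a) mod int N"]) (auto simp: cancel)
  then show "bij (residue_scale N g)"
    using bij_extend_by_id unfolding residue_scale_def[abs_def] by fastforce
  show "residue_scale N g a \<in> {0..<int N} \<longleftrightarrow> a \<in> {0..<int N}" for a
    using assms(1) by (simp add: residue_scale_def)
  show "residue_scale N g ((a - b) mod int N) = (residue_scale N g a - residue_scale N g b) mod int N"
    if "a \<in> {0..<int N}" and "b \<in> {0..<int N}" for a b
    using that assms(1) by (simp add: residue_scale_def mod_simps right_diff_distrib)
qed (rule assms(1))

lemma dmr0_N_push_tdelta:
  assumes "0 < N" and "coprime \<gamma> (int N)" and \<psi>: "dmr0_N N \<psi>"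
  shows "dmr0_N N (push (valid_T N) (tdelta N \<gamma>) \<psi>)"
proof -
  interpret residue_automorphism N "residue_scale N \<gamma>"
    using residue_automorphism_residue_scale assms by blast
  have "map (tdelta N \<gamma>) w = map (tlet_map (residue_scale N \<gamma>)) w" if "valid_T N w" for w
  proof (rule map_cong[OF refl])
    fix l assume "l \<in> set w"
    then have "case l of TX \<Rightarrow> True | TXA a \<Rightarrow> 0 \<le> a \<and> a < int N"
      using that unfolding valid_T_def by blast
    then show "tdelta N \<gamma> l = tlet_map (residue_scale N \<gamma>) l"
      by (cases l) (simp_all add: residue_scale_def)
  qed
  moreover have "\<psi> w = 0" if "\<not> valid_T N w" for w
    using \<psi> that unfolding dmr0_N_def ser_T_def by blast
  ultimately show ?thesis
    using dmr0_N_map[OF \<psi>] push_map[of "tlet_map (residue_scale N \<gamma>)" "valid_T N" "tdelta N \<gamma>" \<psi>]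
      bij_tlet_map[OF bij] by (simp add: bij_is_inj)
qed

theorem proposition3p14:
  fixes N :: nat and \<gamma> :: int
  assumes "N \<ge> 3" and "coprime \<gamma> (int N)"
  shows "(\<forall>\<psi>. dmr0_N N \<psi> \<longrightarrow> dmr0_N N (push (valid_T N) (tdelta N \<gamma>) \<psi>)) \<and>
         (\<forall>\<psi>. dmr0_mu N \<psi> \<longrightarrow> dmr0_mu N (push (valid_X N) (delta N \<gamma>) \<psi>))"
proof -
  \<comment> \<open>only 0 < N is needed\<close>
  have "0 < N"
    using assms(1) by simp
  then show ?thesis
    using dmr0_N_push_tdelta dmr0_mu_push_delta assms(2) by blast
qed

end
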